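(* For any finite alphabet $\mathcal{X}$ with $|\mathcal{X}|\ge2$ and any pmf $P$ on $\mathcal{X}$, the minimum average age $\bar A^*=\inf_e \bar A(e)$ over all prefix-free codes $e:\mathcal{X}\to\{0,1\}^*$ satisfies $$\frac32 H(P)-\frac12\le \bar A^*\le \frac32\log_2|\mathcal{X}|+1,$$ where $H(P)=-\sum_x P(x)\log_2 P(x)$.
   Context: For a prefix-free code $e$ with codeword lengths $\ell(x)$ and $L=\ell(X)$, $X\sim P$, the average age of the (deterministic) memoryless update scheme is $\bar A(e)=\mathbb{E}[L]+\frac{\mathbb{E}[L^2]}{2\mathbb{E}[L]}-\frac12$. *)

theory Defs
  imports "HOL-Probability.Probability" "HOL-Library.Sublist"
begin

definition prefix_free :: "('a \<Rightarrow> bool list) \<Rightarrow> bool" where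
  "prefix_free e \<longleftrightarrow> (\<forall>x y. x \<noteq> y \<longrightarrow> \<not> prefix (e x) (e y))"

definition exp_len :: "'a::finite pmf \<Rightarrow> ('a \<Rightarrow> bool list) \<Rightarrow> real" where
  "exp_len P e = (\<Sum>x\<in>UNIV. pmf P x * real (length (e x)))"

definition exp_len_sq :: "'a::finite pmf \<Rightarrow> ('a \<Rightarrow> bool list) \<Rightarrow> real" where
  "exp_len_sq P e = (\<Sum>x\<in>UNIV. pmf P x * (real (length (e x)))^2)"

definition avg_age :: "'a::finite pmf \<Rightarrow> ('a \<Rightarrow> bool list) \<Rightarrow> real" where
  "avg_age P e = exp_len P e + exp_len_sq P e / (2 * exp_len P e) - 1/2"

definition min_avg_age :: "'a::finite pmf \<Rightarrow> real" where
  "min_avg_age P = Inf {avg_age P e | e. prefix_free e}"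

text \<open>Shannon entropy in bits (convention 0 log 0 = 0, since log 2 0 = 0 in Isabelle).\<close>
definition entropy2 :: "'a::finite pmf \<Rightarrow> real" where
  "entropy2 P = - (\<Sum>x\<in>UNIV. pmf P x * log 2 (pmf P x))"

end

theory Submission
  imports Defs
begin

text \<open>For the lower bound, Jensen's inequality E[L^2] \<ge> E[L]^2 gives average age at least
  3/2 E[L] - 1/2, and E[L] \<ge> H(P) is the source coding theorem (Kraft's inequality followed by
  Gibbs' inequality). For the upper bound, a fixed-length code with k = ceil(log2 |X|) bits has
  E[L] = k and E[L^2] = k^2, hence average age 3/2 k - 1/2.\<close>

lemma card_bool_lists_length: "card {u::bool list. length u = k} = 2 ^ k"
  using card_lists_length_eq[of "UNIV::bool set" k] by simp

lemma finite_bool_lists_length: "finite {u::bool list. length u = k}"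
  using finite_lists_length_eq[of "UNIV::bool set" k] by simp

lemma card_prefix_extensions:
  assumes "length w \<le> m"
  shows "card {v::bool list. length v = m \<and> prefix w v} = 2 ^ (m - length w)"
proof -
  have "{v::bool list. length v = m \<and> prefix w v} = (@) w ` {u. length u = m - length w}"
    using assms by (auto simp: prefix_def)
  also have "card \<dots> = 2 ^ (m - length w)"
    by (subst card_image) (auto simp: inj_on_def card_bool_lists_length)
  finally show ?thesis .
qed

lemma kraft_inequality:
  fixes e :: "'a::finite \<Rightarrow> bool list"
  assumes "prefix_free e"
  shows "(\<Sum>x\<in>UNIV. (1/2::real) ^ length (e x)) \<le> 1"
proof -
  define m where "m = Max (range (\<lambda>x. length (e x)))"
  have len_le: "length (e x) \<le> m" for x
    unfolding m_def by simp
  \<comment> \<open>Prefix-freeness makes the sets of length-m extensions of distinct codewords disjoint.\<close>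
  define S where "S x = {v::bool list. length v = m \<and> prefix (e x) v}" for x
  have disj: "disjoint_family S"
    using assms unfolding disjoint_family_on_def S_def prefix_free_def
    by (auto dest: prefix_same_cases)
  have S_sub: "S x \<subseteq> {v. length v = m}" for x
    unfolding S_def by auto
  have "(\<Sum>x\<in>UNIV. (2::nat) ^ (m - length (e x))) = (\<Sum>x\<in>UNIV. card (S x))"
    unfolding S_def using card_prefix_extensions[OF len_le] by simp
  also have "\<dots> = card (\<Union>x. S x)"
    using card_UN_disjoint'[OF disj] finite_subset[OF S_sub finite_bool_lists_length] by simp
  also have "\<dots> \<le> card {v::bool list. length v = m}"
    using S_sub by (intro card_mono finite_bool_lists_length) blast
  finally have count: "real (\<Sum>x\<in>UNIV. (2::nat) ^ (m - length (e x))) \<le> real (2 ^ m)"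
    unfolding card_bool_lists_length of_nat_le_iff .
  have "2 ^ m * (\<Sum>x\<in>UNIV. (1/2::real) ^ length (e x)) = (\<Sum>x\<in>UNIV. 2 ^ (m - length (e x)))"
    unfolding sum_distrib_left using len_le by (intro sum.cong) (simp_all add: power_diff power_one_over)
  also have "\<dots> \<le> 2 ^ m"
    using count by simp
  finally show ?thesis
    by simp
qed

lemma mult_log2_ratio_le:
  fixes p q :: real
  assumes "0 \<le> p" "0 < q"
  shows "p * (log 2 q - log 2 p) \<le> (q - p) / ln 2"
proof (cases "p = 0")
  case False
  then have p: "0 < p" using assms by simp
  have "log 2 q - log 2 p = ln (q / p) / ln 2"
    using p assms by (simp add: log_def ln_div diff_divide_distrib)
  also have "\<dots> \<le> (q / p - 1) / ln 2"
    using p assms by (intro divide_right_mono ln_le_minus_one) auto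
  finally have "p * (log 2 q - log 2 p) \<le> p * ((q / p - 1) / ln 2)"
    using p by (intro mult_left_mono) auto
  also have "\<dots> = (q - p) / ln 2"
    using p by (simp add: field_simps)
  finally show ?thesis .
qed (use assms in simp)

lemma gibbs_inequality:
  fixes p q :: "'a \<Rightarrow> real"
  assumes "finite A" "\<And>x. x \<in> A \<Longrightarrow> 0 \<le> p x" "\<And>x. x \<in> A \<Longrightarrow> 0 < q x"
    and "sum p A = 1" "sum q A \<le> 1"
  shows "- (\<Sum>x\<in>A. p x * log 2 (p x)) \<le> - (\<Sum>x\<in>A. p x * log 2 (q x))"
proof -
  have "(\<Sum>x\<in>A. p x * (log 2 (q x) - log 2 (p x))) \<le> (\<Sum>x\<in>A. (q x - p x) / ln 2)"
    using assms by (intro sum_mono mult_log2_ratio_le) auto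
  also have "\<dots> = (sum q A - 1) / ln 2"
    using assms(4) by (simp add: sum_divide_distrib[symmetric] sum_subtractf)
  also have "\<dots> \<le> 0"
    using assms(5) by (simp add: divide_nonpos_pos)
  finally show ?thesis
    by (simp add: right_diff_distrib sum_subtractf)
qed

lemma sum_pmf_UNIV: "(\<Sum>x\<in>UNIV. pmf (P::'a::finite pmf) x) = 1"
  by (rule sum_pmf_eq_1) auto

lemma entropy2_le_exp_len:
  fixes P :: "'a::finite pmf"
  assumes "prefix_free e"
  shows "entropy2 P \<le> exp_len P e"
proof -
  have "entropy2 P \<le> - (\<Sum>x\<in>UNIV. pmf P x * log 2 ((1/2) ^ length (e x)))"
    unfolding entropy2_def
    using kraft_inequality[OF assms] by (intro gibbs_inequality) (auto simp: sum_pmf_UNIV)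
  also have "\<dots> = exp_len P e"
    by (simp add: exp_len_def log_nat_power log_divide sum_negf[symmetric])
  finally show ?thesis .
qed

lemma exp_len_sq_ge:
  fixes P :: "'a::finite pmf"
  shows "(exp_len P e)\<^sup>2 \<le> exp_len_sq P e"
proof -
  define m where "m = exp_len P e"
  have "0 \<le> (\<Sum>x\<in>UNIV. pmf P x * (real (length (e x)) - m)\<^sup>2)"
    by (rule sum_nonneg) simp
  also have "\<dots> = exp_len_sq P e - 2 * m * exp_len P e + m\<^sup>2 * (\<Sum>x\<in>UNIV. pmf P x)"
    unfolding exp_len_sq_def exp_len_def
    by (simp add: power2_diff algebra_simps sum.distrib sum_subtractf sum_distrib_left
        sum_distrib_right)
  finally show ?thesis
    unfolding m_def sum_pmf_UNIV by (simp add: power2_eq_square)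
qed

lemma avg_age_ge_exp_len:
  fixes P :: "'a::finite pmf"
  assumes "0 < exp_len P e"
  shows "3/2 * exp_len P e - 1/2 \<le> avg_age P e"
proof -
  have "exp_len P e / 2 = (exp_len P e)\<^sup>2 / (2 * exp_len P e)"
    using assms by (simp add: power2_eq_square)
  also have "\<dots> \<le> exp_len_sq P e / (2 * exp_len P e)"
    using assms exp_len_sq_ge by (intro divide_right_mono) auto
  finally show ?thesis
    unfolding avg_age_def by linarith
qed

lemma prefix_free_length_pos:
  fixes e :: "'a::finite \<Rightarrow> bool list"
  assumes "CARD('a) \<ge> 2" "prefix_free e"
  shows "0 < length (e x)"
proof -
  have "UNIV \<noteq> {x}"
  proof
    assume "UNIV = {x}"
    then have "CARD('a) = card {x}"
      by (rule arg_cong)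
    with assms(1) show False
      by simp
  qed
  then obtain y where "y \<noteq> x"
    by blast
  then show ?thesis
    using assms(2) unfolding prefix_free_def by (metis Nil_prefix length_greater_0_conv)
qed

lemma exp_len_ge_one:
  fixes P :: "'a::finite pmf"
  assumes "\<And>x. 0 < length (e x)"
  shows "1 \<le> exp_len P e"
proof -
  have "(\<Sum>x\<in>UNIV. pmf P x * 1) \<le> exp_len P e"
    unfolding exp_len_def using assms by (intro sum_mono mult_left_mono) (auto simp: Suc_le_eq)
  then show ?thesis
    by (simp add: sum_pmf_UNIV)
qed

lemma avg_age_lower_bound:
  fixes P :: "'a::finite pmf"
  assumes "CARD('a) \<ge> 2" "prefix_free e"
  shows "3/2 * entropy2 P - 1/2 \<le> avg_age P e"
proof -
  have "1 \<le> exp_len P e"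
    using prefix_free_length_pos[OF assms] by (rule exp_len_ge_one)
  then show ?thesis
    using avg_age_ge_exp_len[of P e] entropy2_le_exp_len[OF assms(2), of P] by simp
qed

lemma prefix_free_if_inj_const_length:
  assumes "inj e" "\<And>x. length (e x) = k"
  shows "prefix_free e"
  using assms unfolding prefix_free_def inj_def
  by (metis prefix_order.eq_iff prefix_length_le append_eq_conv_conj prefix_def take_all)

lemma avg_age_const_length:
  fixes P :: "'a::finite pmf"
  assumes "\<And>x. length (e x) = k"
  shows "avg_age P e = 3/2 * k - 1/2"
proof -
  have "exp_len P e = k" "exp_len_sq P e = k\<^sup>2"
    unfolding exp_len_def exp_len_sq_def assms
    by (simp_all add: sum_distrib_right[symmetric] sum_pmf_UNIV)
  then show ?thesis
    unfolding avg_age_def by (cases "k = 0") (simp_all add: power2_eq_square)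
qed

lemma ex_inj_const_length_code:
  assumes "CARD('a::finite) \<le> 2 ^ k"
  shows "\<exists>e :: 'a \<Rightarrow> bool list. inj e \<and> (\<forall>x. length (e x) = k)"
proof -
  obtain e :: "'a \<Rightarrow> bool list" where "range e \<subseteq> {u. length u = k}" "inj e"
    using card_le_inj[of "UNIV::'a set" "{u::bool list. length u = k}"] assms
    by (auto simp: finite_bool_lists_length card_bool_lists_length)
  then show ?thesis
    by blast
qed

lemma avg_age_upper_bound:
  fixes P :: "'a::finite pmf"
  assumes "CARD('a) \<ge> 2"
  shows "\<exists>e. prefix_free e \<and> avg_age P e \<le> 3/2 * log 2 (real CARD('a)) + 1"
proof -
  obtain i where i: "2 ^ i < CARD('a)" "CARD('a) \<le> 2 ^ (i + 1)"
    using ex_power_ivl2[of 2 "CARD('a)"] assms by auto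
  obtain e :: "'a \<Rightarrow> bool list" where e: "inj e" "\<And>x. length (e x) = i + 1"
    using ex_inj_const_length_code[OF i(2)] by blast
  have "(2::real) ^ i < real CARD('a)"
    using i(1) by (metis of_nat_less_iff of_nat_numeral of_nat_power)
  then have "real i < log 2 (real CARD('a))"
    by (simp add: less_log_iff powr_realpow)
  moreover have "avg_age P e = 3/2 * real i + 1"
    using avg_age_const_length[of e "i + 1" P] e(2) by (simp add: algebra_simps)
  ultimately have "avg_age P e \<le> 3/2 * log 2 (real CARD('a)) + 1"
    by linarith
  then show ?thesis
    using prefix_free_if_inj_const_length[OF e] by blast
qed

theorem mainTheorem3:
  fixes P :: "'a::finite pmf"
  assumes "CARD('a) \<ge> 2"
  shows "3/2 * entropy2 P - 1/2 \<le> min_avg_age P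
         \<and> min_avg_age P \<le> 3/2 * log 2 (real CARD('a)) + 1"
proof -
  let ?ages = "{avg_age P e | e. prefix_free e}"
  obtain e0 where e0: "prefix_free e0" "avg_age P e0 \<le> 3/2 * log 2 (real CARD('a)) + 1"
    using avg_age_upper_bound[OF assms] by blast
  have lower: "3/2 * entropy2 P - 1/2 \<le> a" if "a \<in> ?ages" for a
    using that avg_age_lower_bound[OF assms] by blast
  have "3/2 * entropy2 P - 1/2 \<le> Inf ?ages"
    using e0(1) lower by (intro cInf_greatest) auto
  moreover have "Inf ?ages \<le> avg_age P e0"
    using e0(1) lower by (intro cInf_lower) (auto simp: bdd_below_def)
  ultimately show ?thesis
    unfolding min_avg_age_def using e0(2) by linarith
qed

end
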